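(* Suppose $\gamma>0$ and $\int^\infty\frac{\mathrm{d}x}{R(x)}<\infty$. Then for all $b>0$ and all $\lambda>0$, $\sum_{n=0}^\infty\lambda^nW_n(b)<\infty$.
   Context: Let $\Psi(\lambda)=\gamma\lambda+\frac{\sigma^2}{2}\lambda^2+\int_0^\infty(e^{-\lambda z}-1+\lambda z)\,\pi(\mathrm{d}z)$ for $\lambda\ge0$, with $\sigma\ge0$ and $\pi$ a measure on $(0,\infty)$ with $\int_0^\infty(z\wedge z^2)\pi(\mathrm{d}z)<\infty$. $R$ is continuous on $[0,\infty)$ and strictly positive on $(0,\infty)$. $W$ is the scale function associated with $\Psi$: $W(x)=0$ for $x<0$, $W$ continuous strictly increasing on $[0,\infty)$ with $\int_0^\infty e^{-qy}W(y)\mathrm{d}y=1/\Psi(q)$ for $q>0$. $W_0(x)=1$ and $W_{n+1}(x)=\int_x^\infty\frac{W(z-x)}{R(z)}W_n(z)\,\mathrm{d}z$ for $x\ge0$, $n\ge0$. *)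

theory Defs
  imports "HOL-Analysis.Analysis"
begin

text \<open>Laplace exponent Psi of a spectrally negative Levy process with Levy measure pi
  (a measure on the reals carried by the half-line (0,infinity)).\<close>
definition Psi :: "real \<Rightarrow> real \<Rightarrow> real measure \<Rightarrow> real \<Rightarrow> real" where
  "Psi \<gamma> \<sigma> \<pi> l = \<gamma> * l + \<sigma>\<^sup>2 / 2 * l\<^sup>2
     + (\<integral>z\<in>{0<..}. (exp (- l * z) - 1 + l * z) \<partial>\<pi>)"

text \<open>The iterated functions W_n, valued in the extended nonnegative reals
  (the defining integrals have nonnegative integrands).\<close>
primrec Wn :: "(real \<Rightarrow> real) \<Rightarrow> (real \<Rightarrow> real) \<Rightarrow> nat \<Rightarrow> real \<Rightarrow> ennreal" where
  "Wn W R 0 x = 1"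
| "Wn W R (Suc n) x = (\<integral>\<^sup>+ z\<in>{x..}. ennreal (W (z - x) / R z) * Wn W R n z \<partial>lborel)"

end

theory Submission
  imports Defs
begin

text \<open>
  Since \<open>\<Psi>(q) \<ge> \<gamma> q\<close>, the Laplace transform of the nondecreasing function \<open>W\<close> is at most
  \<open>1/(\<gamma> q)\<close>; taking \<open>q = 1/y\<close> shows that \<open>W\<close> is bounded by some \<open>M\<close>.
  Let \<open>\<Phi>(x) = \<integral>\<^sub>x\<^sup>\<infinity> dz / R(z)\<close>, finite for \<open>x > 0\<close>, with \<open>\<Phi>' = -1/R\<close>; below it appears as
  \<open>T - P x\<close> for a primitive \<open>P\<close> of \<open>1/R\<close> with limit \<open>T\<close> at infinity.
  Then by induction \<open>W\<^sub>n(x) \<le> M\<^sup>n \<Phi>(x)\<^sup>n / n!\<close> for \<open>x \<ge> b\<close>, because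
  \<open>\<integral>\<^sub>x\<^sup>\<infinity> \<Phi>(z)\<^sup>n / R(z) dz = \<Phi>(x)\<^sup>n\<^sup>+\<^sup>1 / (n+1)\<close>.
  Hence \<open>\<Sum> \<lambda>\<^sup>n W\<^sub>n(b) \<le> exp (\<lambda> M \<Phi>(b)) < \<infinity>\<close>.
\<close>

lemma Psi_ge_linear: "\<gamma> * q \<le> Psi \<gamma> \<sigma> \<pi> q"
proof -
  have "0 \<le> exp (- q * z) - 1 + q * z" for z
    using exp_ge_add_one_self[of "- q * z"] by simp
  then have "0 \<le> (\<integral>z\<in>{0<..}. (exp (- q * z) - 1 + q * z) \<partial>\<pi>)"
    unfolding set_lebesgue_integral_def by (intro integral_nonneg_AE AE_I2) simp
  then show ?thesis
    unfolding Psi_def by simp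
qed

lemma laplace_transform_ge_of_mono_on:
  fixes f :: "real \<Rightarrow> real"
  assumes f_mono: "mono_on {0..} f" and f0: "f 0 \<ge> 0"
    and lap: "((\<lambda>x. exp (- q * x) * f x) has_integral L) {0..}"
    and "q > 0" "y \<ge> 0"
  shows "exp (- q * y) * f y / q \<le> L"
proof -
  have "((\<lambda>x. f y * exp (- q * x)) has_integral f y * (exp (- q * y) / q)) {y..}"
    using \<open>q > 0\<close> by (intro has_integral_mult_right has_integral_exp_minus_to_infinity)
  then have step: "((\<lambda>x. if x \<in> {y..} then f y * exp (- q * x) else 0) has_integral
      exp (- q * y) * f y / q) {0..}"
    using \<open>y \<ge> 0\<close> by (subst has_integral_restrict) (auto simp: Int_absorb2 mult.commute)
  have le: "(if x \<in> {y..} then f y * exp (- q * x) else 0) \<le> exp (- q * x) * f x"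
    if "x \<in> {0..}" for x
    using that \<open>y \<ge> 0\<close> mono_onD[OF f_mono, of 0 x] mono_onD[OF f_mono, of y x] f0
    by (auto simp: mult.commute)
  show ?thesis
    by (rule has_integral_le[OF step lap le])
qed

lemma mono_on_le_of_laplace_transform_le:
  fixes W :: "real \<Rightarrow> real"
  assumes W_mono: "mono_on {0..} W"
    and lap: "\<And>q. q > 0 \<Longrightarrow> ((\<lambda>x. exp (- q * x) * W x) has_integral L q) {0..}"
    and L_le: "\<And>q. q > 0 \<Longrightarrow> L q \<le> C / q"
    and "y \<ge> 0"
  shows "W y \<le> W 0 + exp 1 * (C - W 0)"
proof -
  have bound: "W y - W 0 \<le> exp 1 * (C - W 0)" if "y > 0" for y
  proof -
    define q where "q = 1 / y"
    have "q > 0" "q * y = 1"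
      using \<open>y > 0\<close> by (simp_all add: q_def)
    have "((\<lambda>x. W 0 * exp (- q * x)) has_integral W 0 * (exp (- q * 0) / q)) {0..}"
      using \<open>q > 0\<close> by (intro has_integral_mult_right has_integral_exp_minus_to_infinity)
    from has_integral_diff[OF lap[OF \<open>q > 0\<close>] this]
    have "((\<lambda>x. exp (- q * x) * (W x - W 0)) has_integral L q - W 0 / q) {0..}"
      by (simp add: algebra_simps)
    moreover have "mono_on {0..} (\<lambda>x. W x - W 0)"
      using W_mono by (auto simp: mono_on_def)
    ultimately have "exp (- q * y) * (W y - W 0) / q \<le> L q - W 0 / q"
      using \<open>q > 0\<close> \<open>y > 0\<close> by (intro laplace_transform_ge_of_mono_on) auto
    also have "\<dots> \<le> (C - W 0) / q"
      using L_le[OF \<open>q > 0\<close>] by (simp add: diff_divide_distrib)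
    finally have "exp (- 1) * (W y - W 0) \<le> C - W 0"
      using \<open>q > 0\<close> \<open>q * y = 1\<close> by (simp add: divide_le_cancel)
    then show ?thesis
      by (simp add: exp_minus field_simps)
  qed
  show ?thesis
  proof (cases "y = 0")
    case True
    have "W 0 \<le> W 1"
      using W_mono by (auto intro: mono_onD)
    with bound[of 1] True show ?thesis by simp
  next
    case False
    with bound[of y] \<open>y \<ge> 0\<close> show ?thesis by simp
  qed
qed

lemma absolutely_integrable_on_atLeast_extend:
  fixes f :: "real \<Rightarrow> real"
  assumes "continuous_on {a..c} f" and "f absolutely_integrable_on {c..}"
  shows "f absolutely_integrable_on {a..}"
proof -
  have "f absolutely_integrable_on ({a..c} \<union> {c..})"
    using assms by (intro set_integrable_Un absolutely_integrable_continuous_real) auto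
  then show ?thesis
    by (rule set_integrable_subset) auto
qed

lemma tendsto_integral_at_top:
  fixes f :: "real \<Rightarrow> real"
  assumes "f absolutely_integrable_on {a..}"
  shows "((\<lambda>y. integral {a..y} f) \<longlongrightarrow> integral {a..} f) at_top"
proof -
  have "(LINT x:{a..y}|lebesgue. f x) = integral {a..y} f" for y
    using set_integrable_subset[OF assms] by (intro set_lebesgue_integral_eq_integral(2)) auto
  moreover have "((\<lambda>y. LINT x:{a..y}|lebesgue. f x) \<longlongrightarrow> (LINT x:{a..}|lebesgue. f x)) at_top"
    using assms by (intro tendsto_set_lebesgue_integral_at_top) auto
  ultimately show ?thesis
    using set_lebesgue_integral_eq_integral(2)[OF assms] by simp
qed

lemma integral_has_real_derivative_at:
  fixes f :: "real \<Rightarrow> real"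
  assumes "continuous_on {a..} f" and "a < x"
  shows "((\<lambda>y. integral {a..y} f) has_real_derivative f x) (at x)"
proof -
  have "((\<lambda>y. integral {a..y} f) has_real_derivative f x) (at x within {a..x+1})"
    using assms by (intro integral_has_real_derivative continuous_on_subset[OF assms(1)]) auto
  moreover have "x \<in> interior {a..x+1}"
    using assms(2) by simp
  ultimately show ?thesis
    by (metis at_within_interior)
qed

lemma DERIV_nonneg_imp_le_tendsto_at_top:
  fixes P \<rho> :: "real \<Rightarrow> real"
  assumes P_deriv: "\<And>z. a \<le> z \<Longrightarrow> (P has_real_derivative \<rho> z) (at z)"
    and \<rho>_nonneg: "\<And>z. a \<le> z \<Longrightarrow> 0 \<le> \<rho> z"
    and P_lim: "(P \<longlongrightarrow> T) at_top" and "a \<le> x"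
  shows "P x \<le> T"
proof (rule tendsto_lowerbound[OF P_lim])
  show "\<forall>\<^sub>F y in at_top. P x \<le> P y"
    using eventually_ge_at_top[of x]
  proof eventually_elim
    case (elim y)
    show ?case
      by (rule DERIV_nonneg_imp_nondecreasing[OF elim])
        (use \<open>a \<le> x\<close> P_deriv \<rho>_nonneg in \<open>meson order_trans\<close>)
  qed
qed simp

lemma nn_integral_power_tail:
  fixes \<rho> P :: "real \<Rightarrow> real"
  assumes \<rho>_cont: "continuous_on {a..} \<rho>" and \<rho>_nonneg: "\<And>z. a \<le> z \<Longrightarrow> 0 \<le> \<rho> z"
    and P_deriv: "\<And>z. a \<le> z \<Longrightarrow> (P has_real_derivative \<rho> z) (at z)"
    and P_lim: "(P \<longlongrightarrow> T) at_top" and "a \<le> x" and "0 \<le> c"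
  shows "(\<integral>\<^sup>+z\<in>{x..}. ennreal (c * \<rho> z * (T - P z) ^ n) \<partial>lborel)
    = ennreal (c * (T - P x) ^ Suc n / Suc n)"
proof -
  define g where "g z = c * \<rho> z * (T - P z) ^ n" for z
  define F where "F z = - (c * (T - P z) ^ Suc n / Suc n)" for z
  have P_le: "P z \<le> T" if "a \<le> z" for z
    using DERIV_nonneg_imp_le_tendsto_at_top[OF P_deriv \<rho>_nonneg P_lim that] .
  have P_cont: "continuous_on {a..} P"
    using P_deriv by (intro continuous_at_imp_continuous_on ballI DERIV_isCont) auto
  have "(\<integral>\<^sup>+z. ennreal (indicator {x..} z *\<^sub>R g z) * indicator {x..} z \<partial>lborel) = 0 - F x"
  proof (rule nn_integral_FTC_atLeast)
    have "continuous_on {x..} g"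
      unfolding g_def using \<open>a \<le> x\<close>
      by (intro continuous_intros continuous_on_subset[OF \<rho>_cont] continuous_on_subset[OF P_cont]) auto
    then show "(\<lambda>z. indicator {x..} z *\<^sub>R g z) \<in> borel_measurable borel"
      by (intro borel_measurable_continuous_on_indicator) auto
    show "DERIV F z :> indicator {x..} z *\<^sub>R g z" if "x \<le> z" for z
    proof -
      have "a \<le> z"
        using that \<open>a \<le> x\<close> by simp
      have "DERIV F z :> - (c * (Suc n * (T - P z) ^ n * (0 - \<rho> z)) / Suc n)"
        unfolding F_def by (rule derivative_eq_intros P_deriv[OF \<open>a \<le> z\<close>] refl | simp)+
      then show ?thesis
        using that by (simp add: g_def ac_simps)
    qed
    show "0 \<le> indicator {x..} z *\<^sub>R g z" if "x \<le> z" for z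
      unfolding g_def using that \<open>a \<le> x\<close> \<open>0 \<le> c\<close> \<rho>_nonneg P_le by simp
    show "(F \<longlongrightarrow> 0) at_top"
      unfolding F_def by (rule tendsto_eq_intros P_lim refl | simp)+
  qed
  moreover have "ennreal (indicator {x..} z *\<^sub>R g z) * indicator {x..} z
      = ennreal (g z) * indicator {x..} z" for z
    by (simp split: split_indicator)
  ultimately show ?thesis
    by (simp add: g_def F_def)
qed

lemma Wn_Suc_le_power_tail:
  fixes W R P :: "real \<Rightarrow> real"
  assumes R_cont: "continuous_on {b..} R" and R_pos: "\<And>z. b \<le> z \<Longrightarrow> 0 < R z"
    and P_deriv: "\<And>z. b \<le> z \<Longrightarrow> (P has_real_derivative 1 / R z) (at z)"
    and P_lim: "(P \<longlongrightarrow> T) at_top"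
    and W_le: "\<And>y. 0 \<le> y \<Longrightarrow> W y \<le> M" and "0 \<le> M"
    and Wn_le: "\<And>z. b \<le> z \<Longrightarrow> Wn W R n z \<le> ennreal (M ^ n * (T - P z) ^ n / fact n)"
    and "b \<le> x"
  shows "Wn W R (Suc n) x \<le> ennreal (M ^ Suc n * (T - P x) ^ Suc n / fact (Suc n))"
proof -
  have inverse_R_nonneg: "0 \<le> 1 / R z" if "b \<le> z" for z
    using R_pos[OF that] by simp
  define c where "c = M ^ Suc n / fact n"
  have "Wn W R (Suc n) x = (\<integral>\<^sup>+z\<in>{x..}. ennreal (W (z - x) / R z) * Wn W R n z \<partial>lborel)"
    by simp
  also have "\<dots> \<le> (\<integral>\<^sup>+z\<in>{x..}. ennreal (c * (1 / R z) * (T - P z) ^ n) \<partial>lborel)"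
  proof (intro nn_integral_mono)
    fix z
    show "ennreal (W (z - x) / R z) * Wn W R n z * indicator {x..} z
      \<le> ennreal (c * (1 / R z) * (T - P z) ^ n) * indicator {x..} z"
    proof (cases "x \<le> z")
      case True
      with \<open>b \<le> x\<close> have "b \<le> z" by simp
      have "ennreal (W (z - x) / R z) \<le> ennreal (M / R z)"
        using True W_le[of "z - x"] R_pos[OF \<open>b \<le> z\<close>] by (intro ennreal_leI divide_right_mono) auto
      then have "ennreal (W (z - x) / R z) * Wn W R n z
          \<le> ennreal (M / R z) * ennreal (M ^ n * (T - P z) ^ n / fact n)"
        using Wn_le[OF \<open>b \<le> z\<close>] by (rule mult_mono) auto
      also have "\<dots> = ennreal (c * (1 / R z) * (T - P z) ^ n)"
        using \<open>0 \<le> M\<close> R_pos[OF \<open>b \<le> z\<close>]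
          DERIV_nonneg_imp_le_tendsto_at_top[OF P_deriv inverse_R_nonneg P_lim \<open>b \<le> z\<close>]
        by (simp add: c_def ennreal_mult'[symmetric] field_simps)
      finally show ?thesis
        using True by simp
    qed simp
  qed
  also have "\<dots> = ennreal (c * (T - P x) ^ Suc n / Suc n)"
  proof (rule nn_integral_power_tail[OF _ inverse_R_nonneg P_deriv P_lim \<open>b \<le> x\<close>])
    show "continuous_on {b..} (\<lambda>z. 1 / R z)"
      using R_cont R_pos by (intro continuous_intros) force+
    show "0 \<le> c"
      using \<open>0 \<le> M\<close> by (simp add: c_def)
  qed
  also have "c * (T - P x) ^ Suc n / Suc n = M ^ Suc n * (T - P x) ^ Suc n / fact (Suc n)"
    by (simp add: c_def field_simps)
  finally show ?thesis .
qed

lemma Wn_le_power_tail: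
  fixes W R P :: "real \<Rightarrow> real"
  assumes R_cont: "continuous_on {b..} R" and R_pos: "\<And>z. b \<le> z \<Longrightarrow> 0 < R z"
    and P_deriv: "\<And>z. b \<le> z \<Longrightarrow> (P has_real_derivative 1 / R z) (at z)"
    and P_lim: "(P \<longlongrightarrow> T) at_top"
    and W_le: "\<And>y. 0 \<le> y \<Longrightarrow> W y \<le> M" and "0 \<le> M" and "b \<le> x"
  shows "Wn W R n x \<le> ennreal (M ^ n * (T - P x) ^ n / fact n)"
  using \<open>b \<le> x\<close>
proof (induction n arbitrary: x)
  case (Suc n)
  show ?case
    using Wn_Suc_le_power_tail[OF R_cont R_pos P_deriv P_lim W_le \<open>0 \<le> M\<close> Suc.IH Suc.prems] .
qed simp

lemma convergent_primitive_of_inverse: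
  fixes R :: "real \<Rightarrow> real"
  assumes R_cont: "continuous_on {0..} R" and R_pos: "\<And>x. 0 < x \<Longrightarrow> 0 < R x"
    and R_tail: "\<exists>c>0. (\<lambda>x. 1 / R x) integrable_on {c..}" and "0 < b"
  obtains P T where "\<And>z. b \<le> z \<Longrightarrow> (P has_real_derivative 1 / R z) (at z)"
    and "(P \<longlongrightarrow> T) at_top"
proof -
  obtain c where "0 < c" and c_int: "(\<lambda>x. 1 / R x) integrable_on {c..}"
    using R_tail by blast
  \<comment> \<open>start below \<open>b\<close> so that the primitive is differentiable at \<open>b\<close> itself\<close>
  define a where "a = b / 2"
  have "0 < a" "a < b"
    using \<open>0 < b\<close> by (simp_all add: a_def)
  have "R x \<noteq> 0" if "x \<in> {a..}" for x
    using that \<open>0 < a\<close> R_pos[of x] by simp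
  then have cont: "continuous_on {a..} (\<lambda>x. 1 / R x)"
    using \<open>0 < a\<close>
    by (intro continuous_on_divide continuous_on_const continuous_on_subset[OF R_cont]) auto
  have "0 \<le> 1 / R x" if "x \<in> {c..}" for x
    using that \<open>0 < c\<close> R_pos[of x] by simp
  then have "(\<lambda>x. 1 / R x) absolutely_integrable_on {c..}"
    by (rule nonnegative_absolutely_integrable_1[OF c_int])
  with continuous_on_subset[OF cont, of "{a..c}"]
  have integrable: "(\<lambda>x. 1 / R x) absolutely_integrable_on {a..}"
    by (auto intro: absolutely_integrable_on_atLeast_extend)
  show thesis
  proof (rule that)
    show "((\<lambda>y. integral {a..y} (\<lambda>x. 1 / R x)) has_real_derivative 1 / R z) (at z)"
      if "b \<le> z" for z
      using integral_has_real_derivative_at[OF cont] \<open>a < b\<close> that by simp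
    show "((\<lambda>y. integral {a..y} (\<lambda>x. 1 / R x)) \<longlongrightarrow> integral {a..} (\<lambda>x. 1 / R x)) at_top"
      using integrable by (rule tendsto_integral_at_top)
  qed
qed

lemma suminf_power_mult_less_top_if_le_exp_series:
  fixes w :: "nat \<Rightarrow> ennreal"
  assumes w_le: "\<And>n. w n \<le> ennreal (a ^ n / fact n)" and "0 \<le> a" and "0 \<le> l"
  shows "(\<Sum>n. ennreal (l ^ n) * w n) < \<infinity>"
proof -
  have "ennreal (l ^ n) * w n \<le> ennreal ((l * a) ^ n / fact n)" for n
  proof -
    have "ennreal (l ^ n) * w n \<le> ennreal (l ^ n) * ennreal (a ^ n / fact n)"
      using w_le by (rule mult_left_mono) simp
    also have "\<dots> = ennreal ((l * a) ^ n / fact n)"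
      using \<open>0 \<le> l\<close> by (simp add: ennreal_mult'[symmetric] power_mult_distrib)
    finally show ?thesis .
  qed
  then have "(\<Sum>n. ennreal (l ^ n) * w n) \<le> (\<Sum>n. ennreal ((l * a) ^ n / fact n))"
    by (rule suminf_le) auto
  also have "\<dots> = ennreal (\<Sum>n. (l * a) ^ n / fact n)"
    using \<open>0 \<le> a\<close> \<open>0 \<le> l\<close> summable_exp[of "l * a"]
    by (intro suminf_ennreal2) (auto simp: divide_inverse mult.commute)
  finally show ?thesis
    by (rule le_less_trans) simp
qed

theorem proposition4p5:
  fixes \<gamma> \<sigma> :: real and \<pi> :: "real measure" and R W :: "real \<Rightarrow> real"
  assumes sigma_nonneg: "\<sigma> \<ge> 0"
    and pi_sets: "sets \<pi> = sets borel"
    and pi_support: "emeasure \<pi> {..0} = 0"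
    and pi_int: "(\<integral>\<^sup>+ z\<in>{0<..}. ennreal (min z (z\<^sup>2)) \<partial>\<pi>) < \<infinity>"
    and R_cont: "continuous_on {0..} R"
    and R_pos: "\<And>x. x > 0 \<Longrightarrow> R x > 0"
    and W_neg: "\<And>x. x < 0 \<Longrightarrow> W x = 0"
    and W_cont: "continuous_on {0..} W"
    and W_mono: "strict_mono_on {0..} W"
    and W_laplace: "\<And>q. q > 0 \<Longrightarrow>
          ((\<lambda>y. exp (- q * y) * W y) has_integral (1 / Psi \<gamma> \<sigma> \<pi> q)) {0..}"
    and gamma_pos: "\<gamma> > 0"
    and R_tail: "\<exists>c>0. (\<lambda>x. 1 / R x) integrable_on {c..}"
  shows "\<forall>b>0. \<forall>l>0. (\<Sum>n. ennreal (l ^ n) * Wn W R n b) < \<infinity>"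
proof (intro allI impI)
  fix b l :: real
  assume "0 < b" "0 < l"
  define M where "M = max 0 (W 0 + exp 1 * (1 / \<gamma> - W 0))"
  have W_le: "W y \<le> M" if "0 \<le> y" for y
  proof -
    have Psi_inverse_le: "1 / Psi \<gamma> \<sigma> \<pi> q \<le> (1 / \<gamma>) / q" if "0 < q" for q
      using Psi_ge_linear[of \<gamma> q \<sigma> \<pi>] gamma_pos that by (simp add: frac_le)
    have "W y \<le> W 0 + exp 1 * (1 / \<gamma> - W 0)"
      by (rule mono_on_le_of_laplace_transform_le[OF strict_mono_on_imp_mono_on[OF W_mono] W_laplace])
        (use Psi_inverse_le \<open>0 \<le> y\<close> in auto)
    then show ?thesis
      by (simp add: M_def)
  qed
  obtain P T where P_deriv: "\<And>z. b \<le> z \<Longrightarrow> (P has_real_derivative 1 / R z) (at z)"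
    and P_lim: "(P \<longlongrightarrow> T) at_top"
    using convergent_primitive_of_inverse[OF R_cont R_pos R_tail \<open>0 < b\<close>] by blast
  have "0 \<le> T - P b"
    using \<open>0 < b\<close> R_pos
    by (simp add: DERIV_nonneg_imp_le_tendsto_at_top[OF P_deriv _ P_lim] less_imp_le)
  moreover have "Wn W R n b \<le> ennreal ((M * (T - P b)) ^ n / fact n)" for n
    using Wn_le_power_tail[OF continuous_on_subset[OF R_cont, of "{b..}"] _ P_deriv P_lim W_le]
      \<open>0 < b\<close> R_pos by (simp add: M_def power_mult_distrib)
  ultimately show "(\<Sum>n. ennreal (l ^ n) * Wn W R n b) < \<infinity>"
    using \<open>0 < l\<close> by (intro suminf_power_mult_less_top_if_le_exp_series) (auto simp: M_def)
qed

end
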